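(* Let $(S,K,I)$ be a split graph such that $\Phi(S)$ is simple and complete, with $K=\bigcup_{v\in I}N_S(v)$. Put $\omega=|K|$, $\alpha=|I|$, assume $\alpha\ge2$, and let $U$ be the set of universal vertices of $S$. Then: (1) $S$ is homogeneous; (2) if $d$ is the common degree in $S$ of the vertices of $I$, then $1\le d\le \omega-1$; (3) $|U|\in\{d-1,\ d+1-\alpha\}$; (4) $|U|=d-1$ if and only if $\omega=\alpha+d-1$; (5) $|U|=d+1-\alpha$ if and only if $\omega=d+1$; (6) $\omega=\alpha+|U|$ (in particular $\omega\ge\alpha$); (7) $S$ is active if and only if $U=\varnothing$; (8) if $S$ is active, then $\omega=\alpha$ and $d\in\{1,\omega-1\}$; (9) if $\omega=\alpha$ or $d=1$, then $S$ is active.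
   Context: All graphs are finite and simple. A split graph is a graph $S$ whose vertex set is a disjoint union $V(S)=K\,\dot\cup\,I$ with $K$ a clique and $I$ an independent set; $(K,I)$ is called a bipartition of $S$, and $(S,K,I)$ denotes $S$ together with this fixed bipartition. A 2-switch in a graph $G$ is performed on four distinct vertices $a,b,c,d$ with $ab,cd\in E(G)$ and $ac,bd\notin E(G)$: it deletes $ab,cd$ and adds $ac,bd$; $a,b,c,d$ are said to participate in it. A vertex is active in $G$ if it participates in some 2-switch on $G$; $G$ is active if all its vertices are active. A vertex is universal if it is adjacent to all other vertices. For a split graph $(S,K,I)$ and distinct $u,v\in I$, $\sigma_{uv}(S)$ is the number of induced subgraphs of $S$ isomorphic to $P_4$ containing both $u$ and $v$. The factor graph $\Phi(S)$ is the loopless multigraph with vertex set $I$ having exactly $\sigma_{uv}(S)$ parallel edges between $u$ and $v$; it is simple if $\sigma_{uv}(S)\in\{0,1\}$ for all $u,v$. Graph notions (connected, complete, clique, etc.) applied to $\Phi(S)$ refer to its underlying simple graph, in which $u\sim v$ iff $\sigma_{uv}(S)\ge1$. A vertex $w$ of $(S,K,I)$ is swing if $N_S(w)=K\setminus\{w\}$. $(S,K,I)$ is balanced if $|K|=\omega(S)$ and $|I|=\alpha(S)$; it is known that $S$ is balanced iff it has no swing vertex. $(S,K,I)$ is homogeneous if it is balanced and all vertices of $I$ have the same degree in $S$. *)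

theory Defs
  imports Main
begin

definition simple_graph :: "'a set \<Rightarrow> ('a \<Rightarrow> 'a \<Rightarrow> bool) \<Rightarrow> bool" where
  "simple_graph V E \<longleftrightarrow> finite V \<and> (\<forall>x y. E x y \<longrightarrow> x \<in> V \<and> y \<in> V)
     \<and> (\<forall>x y. E x y \<longrightarrow> E y x) \<and> (\<forall>x. \<not> E x x)"

definition nbhd :: "'a set \<Rightarrow> ('a \<Rightarrow> 'a \<Rightarrow> bool) \<Rightarrow> 'a \<Rightarrow> 'a set" where
  "nbhd V E v = {w \<in> V. E v w}"

definition degree :: "'a set \<Rightarrow> ('a \<Rightarrow> 'a \<Rightarrow> bool) \<Rightarrow> 'a \<Rightarrow> nat" where
  "degree V E v = card (nbhd V E v)"

definition is_clique :: "'a set \<Rightarrow> ('a \<Rightarrow> 'a \<Rightarrow> bool) \<Rightarrow> 'a set \<Rightarrow> bool" where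
  "is_clique V E A \<longleftrightarrow> A \<subseteq> V \<and> (\<forall>x\<in>A. \<forall>y\<in>A. x \<noteq> y \<longrightarrow> E x y)"

definition is_indep :: "'a set \<Rightarrow> ('a \<Rightarrow> 'a \<Rightarrow> bool) \<Rightarrow> 'a set \<Rightarrow> bool" where
  "is_indep V E A \<longleftrightarrow> A \<subseteq> V \<and> (\<forall>x\<in>A. \<forall>y\<in>A. \<not> E x y)"

definition clique_number :: "'a set \<Rightarrow> ('a \<Rightarrow> 'a \<Rightarrow> bool) \<Rightarrow> nat" where
  "clique_number V E = Max {card A | A. is_clique V E A}"

definition indep_number :: "'a set \<Rightarrow> ('a \<Rightarrow> 'a \<Rightarrow> bool) \<Rightarrow> nat" where
  "indep_number V E = Max {card A | A. is_indep V E A}"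

definition split_graph :: "'a set \<Rightarrow> ('a \<Rightarrow> 'a \<Rightarrow> bool) \<Rightarrow> 'a set \<Rightarrow> 'a set \<Rightarrow> bool" where
  "split_graph V E K I \<longleftrightarrow> simple_graph V E \<and> V = K \<union> I \<and> K \<inter> I = {}
     \<and> is_clique V E K \<and> is_indep V E I"

definition induced_P4 :: "('a \<Rightarrow> 'a \<Rightarrow> bool) \<Rightarrow> 'a set \<Rightarrow> bool" where
  "induced_P4 E X \<longleftrightarrow> (\<exists>a b c d. distinct [a, b, c, d] \<and> X = {a, b, c, d}
     \<and> E a b \<and> E b c \<and> E c d \<and> \<not> E a c \<and> \<not> E a d \<and> \<not> E b d)"

definition sigma :: "'a set \<Rightarrow> ('a \<Rightarrow> 'a \<Rightarrow> bool) \<Rightarrow> 'a \<Rightarrow> 'a \<Rightarrow> nat" where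
  "sigma V E u v = card {X. X \<subseteq> V \<and> u \<in> X \<and> v \<in> X \<and> induced_P4 E X}"

text \<open>Factor graph \<Phi>(S) on vertex set I: simple, and complete (underlying simple graph).\<close>
definition factor_simple :: "'a set \<Rightarrow> ('a \<Rightarrow> 'a \<Rightarrow> bool) \<Rightarrow> 'a set \<Rightarrow> bool" where
  "factor_simple V E I \<longleftrightarrow> (\<forall>u\<in>I. \<forall>v\<in>I. u \<noteq> v \<longrightarrow> sigma V E u v \<le> 1)"

definition factor_complete :: "'a set \<Rightarrow> ('a \<Rightarrow> 'a \<Rightarrow> bool) \<Rightarrow> 'a set \<Rightarrow> bool" where
  "factor_complete V E I \<longleftrightarrow> (\<forall>u\<in>I. \<forall>v\<in>I. u \<noteq> v \<longrightarrow> sigma V E u v \<ge> 1)"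

definition two_switch :: "'a set \<Rightarrow> ('a \<Rightarrow> 'a \<Rightarrow> bool) \<Rightarrow> 'a \<Rightarrow> 'a \<Rightarrow> 'a \<Rightarrow> 'a \<Rightarrow> bool" where
  "two_switch V E a b c d \<longleftrightarrow> a \<in> V \<and> b \<in> V \<and> c \<in> V \<and> d \<in> V \<and> distinct [a, b, c, d]
     \<and> E a b \<and> E c d \<and> \<not> E a c \<and> \<not> E b d"

definition active_vertex :: "'a set \<Rightarrow> ('a \<Rightarrow> 'a \<Rightarrow> bool) \<Rightarrow> 'a \<Rightarrow> bool" where
  "active_vertex V E x \<longleftrightarrow> (\<exists>a b c d. two_switch V E a b c d \<and> x \<in> {a, b, c, d})"

definition active_graph :: "'a set \<Rightarrow> ('a \<Rightarrow> 'a \<Rightarrow> bool) \<Rightarrow> bool" where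
  "active_graph V E \<longleftrightarrow> (\<forall>x\<in>V. active_vertex V E x)"

definition universal :: "'a set \<Rightarrow> ('a \<Rightarrow> 'a \<Rightarrow> bool) \<Rightarrow> 'a \<Rightarrow> bool" where
  "universal V E x \<longleftrightarrow> x \<in> V \<and> (\<forall>y\<in>V. y \<noteq> x \<longrightarrow> E x y)"

definition balanced :: "'a set \<Rightarrow> ('a \<Rightarrow> 'a \<Rightarrow> bool) \<Rightarrow> 'a set \<Rightarrow> 'a set \<Rightarrow> bool" where
  "balanced V E K I \<longleftrightarrow> card K = clique_number V E \<and> card I = indep_number V E"

definition homogeneous :: "'a set \<Rightarrow> ('a \<Rightarrow> 'a \<Rightarrow> bool) \<Rightarrow> 'a set \<Rightarrow> 'a set \<Rightarrow> bool" where
  "homogeneous V E K I \<longleftrightarrow> balanced V E K I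
     \<and> (\<forall>u\<in>I. \<forall>v\<in>I. degree V E u = degree V E v)"

end

theory Submission
  imports Defs
begin

(* In a split graph every induced P4 has its two ends in I and its two middle vertices in K.
   Hence for u, v in I the induced P4s through u and v are exactly the paths u - x - y - v with
   x in N(u) - N(v) and y in N(v) - N(u), so sigma_uv = |N(u) - N(v)| * |N(v) - N(u)|, and
   Phi(S) is simple and complete iff all these differences are singletons.

   A family of at least two sets pairwise differing in exactly one element is either a
   sunflower N(v) = C + x_v with |C| = d - 1, or a co-sunflower N(v) = T - y_v with
   |T| = d + 1. The union of the N(v) is K and their intersection is the set U of universal
   vertices, so both cases give omega = alpha + |U| and |U| in {d - 1, d + 1 - alpha}.
   Every vertex of I and every non-universal vertex of K lies on a 2-switch u x, y v built from
   two such differences, whereas a universal vertex lies on none. *)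

lemma obtain_other_element:
  assumes "2 \<le> card A"
  obtains y where "y \<in> A" "y \<noteq> x"
proof -
  have "\<not> A \<subseteq> {x}"
  proof
    assume "A \<subseteq> {x}"
    then have "card A \<le> 1" using card_mono[of "{x}" A] by simp
    with assms show False by simp
  qed
  with that show thesis by blast
qed

lemma card_UN_singletons:
  assumes "finite I" and "\<And>i. i \<in> I \<Longrightarrow> card (X i) = 1"
    and "\<And>i j. i \<in> I \<Longrightarrow> j \<in> I \<Longrightarrow> X i = X j \<Longrightarrow> i = j"
  shows "card (\<Union>(X ` I)) = card I"
proof -
  define x where "x i = the_elem (X i)" for i
  have X: "X i = {x i}" if "i \<in> I" for i
    using assms(2)[OF that] unfolding x_def by (metis card_1_singletonE the_elem_eq)
  then have "\<Union>(X ` I) = x ` I" by auto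
  moreover have "inj_on x I"
    using X assms(3) by (metis inj_onI)
  ultimately show ?thesis by (simp add: card_image)
qed

locale unit_diff_family =
  fixes I :: "'i set" and N :: "'i \<Rightarrow> 'a set"
  assumes finite_N: "\<And>i. i \<in> I \<Longrightarrow> finite (N i)"
    and card_Diff_N: "\<And>i j. i \<in> I \<Longrightarrow> j \<in> I \<Longrightarrow> i \<noteq> j \<Longrightarrow> card (N i - N j) = 1"
begin

lemma card_N_eq:
  assumes "i \<in> I" "j \<in> I"
  shows "card (N i) = card (N j)"
proof (cases "i = j")
  case False
  have "card (N i) = card (N i \<inter> N j) + card (N i - N j)"
    using finite_N[OF assms(1)] by (rule card_Int_Diff)
  moreover have "card (N j) = card (N j \<inter> N i) + card (N j - N i)"
    using finite_N[OF assms(2)] by (rule card_Int_Diff)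
  ultimately show ?thesis
    using card_Diff_N assms False by (simp add: Int_commute)
qed simp

lemma Diff_N_nonempty:
  assumes "i \<in> I" "j \<in> I" "i \<noteq> j"
  shows "N i - N j \<noteq> {}"
  using card_Diff_N[OF assms] by force

lemma N_inj:
  assumes "i \<in> I" "j \<in> I" "N i = N j"
  shows "i = j"
  using Diff_N_nonempty[OF assms(1,2)] assms(3) by blast

lemma Diff_N_eq_singleton:
  assumes "i \<in> I" "j \<in> I" "x \<in> N i" "x \<notin> N j"
  shows "N i - N j = {x}"
proof -
  have "i \<noteq> j" using assms by blast
  then show ?thesis
    using card_Diff_N[OF assms(1,2)] assms(3,4) by (metis DiffI card_1_singletonE singletonD)
qed

lemma card_Int_N:
  assumes "i \<in> I" "j \<in> I" "i \<noteq> j"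
  shows "card (N i \<inter> N j) + 1 = card (N i)"
  using card_Int_Diff[OF finite_N[OF assms(1)], of "N j"] card_Diff_N[OF assms] by simp

lemma card_Un_N:
  assumes "i \<in> I" "j \<in> I" "i \<noteq> j"
  shows "card (N i \<union> N j) = card (N i) + 1"
proof -
  have "N i \<union> N j = N i \<union> (N j - N i)" by blast
  then show ?thesis
    using card_Un_disjoint[of "N i" "N j - N i"] finite_N assms card_Diff_N[of j i] by simp
qed

lemma Int_subset_or_subset_Un:
  assumes u: "u \<in> I" and v: "v \<in> I" and uv: "u \<noteq> v"
  shows "(\<forall>w\<in>I. N u \<inter> N v \<subseteq> N w) \<or> (\<forall>w\<in>I. N w \<subseteq> N u \<union> N v)"
proof (cases "\<forall>w\<in>I. N u \<inter> N v \<subseteq> N w")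
  case False
  then obtain w c where w: "w \<in> I" and c: "c \<in> N u" "c \<in> N v" "c \<notin> N w" by blast
  have "N u - N w = {c}" "N v - N w = {c}"
    using Diff_N_eq_singleton u v w c by auto
  then have "N u \<union> N v - {c} \<subseteq> N w" by blast
  moreover have "card (N u \<union> N v - {c}) = card (N w)"
    using card_Un_N[OF u v uv] card_N_eq[OF u w] finite_N u v c by simp
  ultimately have Nw: "N u \<union> N v - {c} = N w"
    by (rule card_subset_eq[OF finite_N[OF w]])
  have "\<forall>z\<in>I. N z \<subseteq> N u \<union> N v"
  proof (intro ballI subsetI, rule ccontr)
    fix z t assume z: "z \<in> I" and t: "t \<in> N z" "t \<notin> N u \<union> N v"
    have "N z - N u = {t}" "N z - N v = {t}"
      using Diff_N_eq_singleton u v z t by auto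
    then have "N z - {t} \<subseteq> N u \<inter> N v" by blast
    moreover have "card (N z - {t}) = card (N u \<inter> N v)"
      using card_Int_N[OF u v uv] card_N_eq[OF z u] finite_N[OF z] t by simp
    ultimately have "N z - {t} = N u \<inter> N v"
      by (rule card_subset_eq[OF finite_Int[OF disjI1[OF finite_N[OF u]]]])
    then have "{c, t} \<subseteq> N z - N w" using c t Nw by auto
    moreover have "z \<noteq> w" "c \<noteq> t" using t Nw c by auto
    ultimately show False
      using card_mono[of "N z - N w" "{c, t}"] finite_N[OF z] card_Diff_N[OF z w] by simp
  qed
  then show ?thesis ..
qed simp

lemma sunflower_case:
  assumes u: "u \<in> I" and v: "v \<in> I" and uv: "u \<noteq> v" and finite_I: "finite I"
    and core: "\<forall>w\<in>I. N u \<inter> N v \<subseteq> N w"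
  shows "\<Inter>(N ` I) = N u \<inter> N v" and "card (\<Union>(N ` I)) = card (N u \<inter> N v) + card I"
proof -
  let ?C = "N u \<inter> N v"
  show "\<Inter>(N ` I) = ?C" using core u v by auto
  have petals: "card (N w - ?C) = 1" if "w \<in> I" for w
    using card_Int_N[OF u v uv] card_N_eq[OF that u] card_Diff_subset[OF _ core[rule_format, OF that]]
      finite_N[OF u] by simp
  have card_petals: "card (\<Union>w\<in>I. N w - ?C) = card I"
  proof (rule card_UN_singletons[OF finite_I petals])
    fix i j assume i: "i \<in> I" and j: "j \<in> I" and petal_eq: "N i - ?C = N j - ?C"
    have "N i = ?C \<union> (N i - ?C)" "N j = ?C \<union> (N j - ?C)" using core i j by auto
    then show "i = j" using N_inj[OF i j] petal_eq by simp
  qed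
  have "\<Union>(N ` I) = ?C \<union> (\<Union>w\<in>I. N w - ?C)" using u core by auto
  also have "card \<dots> = card ?C + card (\<Union>w\<in>I. N w - ?C)"
    using finite_I finite_N u by (intro card_Un_disjoint) auto
  finally show "card (\<Union>(N ` I)) = card ?C + card I" unfolding card_petals .
qed

lemma co_sunflower_case:
  assumes u: "u \<in> I" and v: "v \<in> I" and uv: "u \<noteq> v" and finite_I: "finite I"
    and hull: "\<forall>w\<in>I. N w \<subseteq> N u \<union> N v"
  shows "\<Union>(N ` I) = N u \<union> N v" and "card (\<Inter>(N ` I)) + card I = card (N u \<union> N v)"
proof -
  let ?T = "N u \<union> N v"
  show "\<Union>(N ` I) = ?T" using hull u v by auto
  have finite_T: "finite ?T" using finite_N u v by simp
  have holes: "card (?T - N w) = 1" if "w \<in> I" for w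
    using card_Un_N[OF u v uv] card_N_eq[OF that u] card_Diff_subset[OF _ hull[rule_format, OF that]]
      finite_N[OF that] by simp
  have card_holes: "card (\<Union>w\<in>I. ?T - N w) = card I"
  proof (rule card_UN_singletons[OF finite_I holes])
    fix i j assume i: "i \<in> I" and j: "j \<in> I" and hole_eq: "?T - N i = ?T - N j"
    have "N i = ?T - (?T - N i)" "N j = ?T - (?T - N j)" using hull i j by auto
    then show "i = j" using N_inj[OF i j] hole_eq by simp
  qed
  have "\<Inter>(N ` I) = ?T - (\<Union>w\<in>I. ?T - N w)" using hull u by auto
  also have "card \<dots> = card ?T - card (\<Union>w\<in>I. ?T - N w)"
    using finite_T by (intro card_Diff_subset) (auto intro: finite_subset)
  finally have "card (\<Inter>(N ` I)) = card ?T - card I" unfolding card_holes .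
  moreover have "card I \<le> card ?T"
    unfolding card_holes[symmetric] using finite_T by (intro card_mono) auto
  ultimately show "card (\<Inter>(N ` I)) + card I = card ?T" by simp
qed

lemma card_Union_Inter:
  assumes finite_I: "finite I" and two: "2 \<le> card I" and i: "i \<in> I"
  shows "card (\<Union>(N ` I)) = card I + card (\<Inter>(N ` I))"
    and "card (\<Inter>(N ` I)) + 1 = card (N i) \<or> card (\<Inter>(N ` I)) + card I = card (N i) + 1"
proof -
  obtain v where v: "v \<in> I" and uv: "i \<noteq> v"
    using obtain_other_element[OF two] by metis
  have "card (\<Union>(N ` I)) = card I + card (\<Inter>(N ` I)) \<and>
    (card (\<Inter>(N ` I)) + 1 = card (N i) \<or> card (\<Inter>(N ` I)) + card I = card (N i) + 1)"
    using Int_subset_or_subset_Un[OF i v uv]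
  proof
    assume "\<forall>w\<in>I. N i \<inter> N v \<subseteq> N w"
    then show ?thesis using sunflower_case[OF i v uv finite_I] card_Int_N[OF i v uv] by simp
  next
    assume "\<forall>w\<in>I. N w \<subseteq> N i \<union> N v"
    then show ?thesis using co_sunflower_case[OF i v uv finite_I] card_Un_N[OF i v uv] by simp
  qed
  then show "card (\<Union>(N ` I)) = card I + card (\<Inter>(N ` I))"
    and "card (\<Inter>(N ` I)) + 1 = card (N i) \<or> card (\<Inter>(N ` I)) + card I = card (N i) + 1"
    by auto
qed

end

lemma Max_card_eqI:
  assumes "finite V" and "\<And>A. P A \<Longrightarrow> A \<subseteq> V" and "P B" and "\<And>A. P A \<Longrightarrow> card A \<le> card B"
  shows "Max {card A | A. P A} = card B"
proof (rule Max_eqI)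
  have "{card A | A. P A} \<subseteq> card ` Pow V" using assms(2) by blast
  then show "finite {card A | A. P A}" by (rule finite_subset) (simp add: assms(1))
qed (use assms(3,4) in auto)

lemma not_active_vertex_if_universal:
  assumes "simple_graph V E" and "universal V E x"
  shows "\<not> active_vertex V E x"
  using assms unfolding simple_graph_def universal_def active_vertex_def two_switch_def
  by (metis distinct_length_2_or_more insertE singleton_iff)

locale split_bipartition =
  fixes V :: "'a set" and E :: "'a \<Rightarrow> 'a \<Rightarrow> bool" and K I :: "'a set"
  assumes split: "split_graph V E K I"
begin

lemma is_simple_graph: "simple_graph V E"
  and V_eq: "V = K \<union> I" and K_I_disjoint: "K \<inter> I = {}"
  and finite_V: "finite V" and adj_sym: "E x y \<Longrightarrow> E y x"
  and clique_adj: "x \<in> K \<Longrightarrow> y \<in> K \<Longrightarrow> x \<noteq> y \<Longrightarrow> E x y"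
  and indep_nonadj: "x \<in> I \<Longrightarrow> y \<in> I \<Longrightarrow> \<not> E x y"
  using split unfolding split_graph_def simple_graph_def is_clique_def is_indep_def by meson+

lemma finite_K: "finite K" and finite_I: "finite I" and finite_nbhd: "finite (nbhd V E v)"
  using finite_V V_eq unfolding nbhd_def by simp_all

lemma nbhd_subset_K: "v \<in> I \<Longrightarrow> nbhd V E v \<subseteq> K"
  using V_eq indep_nonadj unfolding nbhd_def by blast

lemma induced_P4_parts:
  assumes "{a, b, c, d} \<subseteq> V" and "distinct [a, b, c, d]"
    and "E a b" "E b c" "E c d" "\<not> E a c" "\<not> E a d" "\<not> E b d"
  shows "a \<in> I \<and> b \<in> K \<and> c \<in> K \<and> d \<in> I"
proof -
  have "a \<notin> K \<or> c \<notin> K" "a \<notin> K \<or> d \<notin> K" "b \<notin> K \<or> d \<notin> K"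
    using clique_adj assms(2,6-8) by auto
  moreover have "a \<notin> I \<or> b \<notin> I" "b \<notin> I \<or> c \<notin> I" "c \<notin> I \<or> d \<notin> I"
    using indep_nonadj assms(3-5) by blast+
  moreover have "a \<in> K \<union> I" "b \<in> K \<union> I" "c \<in> K \<union> I" "d \<in> K \<union> I"
    using assms(1) V_eq by blast+
  ultimately show ?thesis by blast
qed

lemma cross_path:
  assumes u: "u \<in> I" and v: "v \<in> I"
    and x: "x \<in> nbhd V E u - nbhd V E v" and y: "y \<in> nbhd V E v - nbhd V E u"
  shows "distinct [u, x, y, v] \<and> {u, x, y, v} \<subseteq> V
    \<and> E u x \<and> E x y \<and> E y v \<and> \<not> E u y \<and> \<not> E u v \<and> \<not> E x v"
proof -
  have K: "x \<in> K" "y \<in> K" using x y nbhd_subset_K u v by blast+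
  have ux: "E u x" "\<not> E v x" and vy: "E v y" "\<not> E u y" and V: "x \<in> V" "y \<in> V"
    using x y unfolding nbhd_def by blast+
  have "x \<noteq> y" using x y by blast
  then have "E x y" using clique_adj K by blast
  moreover have "E y v" "\<not> E x v" using adj_sym vy ux by blast+
  moreover have "\<not> E u v" using indep_nonadj u v by blast
  moreover have "u \<noteq> v" using ux by blast
  moreover have "{u, v} \<inter> {x, y} = {}" using K_I_disjoint u v K by blast
  ultimately show ?thesis using ux vy V V_eq u v \<open>x \<noteq> y\<close> by auto
qed

lemma induced_P4_cross_path:
  assumes "u \<in> I" "v \<in> I" "x \<in> nbhd V E u - nbhd V E v" "y \<in> nbhd V E v - nbhd V E u"
  shows "induced_P4 E {u, x, y, v}"
  using cross_path[OF assms] unfolding induced_P4_def by blast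

lemma two_switch_cross_path:
  assumes "u \<in> I" "v \<in> I" "x \<in> nbhd V E u - nbhd V E v" "y \<in> nbhd V E v - nbhd V E u"
  shows "two_switch V E u x y v"
  using cross_path[OF assms] unfolding two_switch_def by blast

lemma induced_P4_through_indep_pair:
  assumes u: "u \<in> I" and v: "v \<in> I" and uv: "u \<noteq> v"
    and X: "X \<subseteq> V" "u \<in> X" "v \<in> X" "induced_P4 E X"
  obtains x y where "x \<in> nbhd V E u - nbhd V E v" "y \<in> nbhd V E v - nbhd V E u"
    and "X = {u, x, y, v}"
proof -
  obtain a b c d where abcd: "distinct [a, b, c, d]" "X = {a, b, c, d}"
    and path: "E a b" "E b c" "E c d" "\<not> E a c" "\<not> E a d" "\<not> E b d"
    using X(4) unfolding induced_P4_def by blast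
  have parts: "a \<in> I" "b \<in> K" "c \<in> K" "d \<in> I"
    using induced_P4_parts[OF _ abcd(1) path] X(1) abcd(2) by blast+
  have "u \<in> {a, d}" "v \<in> {a, d}"
    using X(2,3) abcd(2) u v parts K_I_disjoint by blast+
  then consider "u = a" "v = d" | "u = d" "v = a" using uv by blast
  then show thesis
  proof cases
    case 1
    then show thesis using that[of b c] path X(1) abcd(2) adj_sym unfolding nbhd_def by blast
  next
    case 2
    then show thesis using that[of c b] path X(1) abcd(2) adj_sym unfolding nbhd_def by blast
  qed
qed

lemma sigma_eq_card_nbhd_Diff:
  assumes u: "u \<in> I" and v: "v \<in> I" and uv: "u \<noteq> v"
  shows "sigma V E u v = card (nbhd V E u - nbhd V E v) * card (nbhd V E v - nbhd V E u)"
proof -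
  let ?N = "nbhd V E" and ?P = "\<lambda>(x, y). {u, x, y, v}"
  let ?A = "?N u - ?N v" and ?B = "?N v - ?N u"
  have "{X. X \<subseteq> V \<and> u \<in> X \<and> v \<in> X \<and> induced_P4 E X} = ?P ` (?A \<times> ?B)"
  proof (intro equalityI subsetI)
    fix X assume "X \<in> {X. X \<subseteq> V \<and> u \<in> X \<and> v \<in> X \<and> induced_P4 E X}"
    then obtain x y where "x \<in> ?A" "y \<in> ?B" "X = {u, x, y, v}"
      using induced_P4_through_indep_pair[OF u v uv] by blast
    then show "X \<in> ?P ` (?A \<times> ?B)" by force
  next
    fix X assume "X \<in> ?P ` (?A \<times> ?B)"
    then obtain x y where "x \<in> ?A" "y \<in> ?B" "X = {u, x, y, v}" by blast
    then show "X \<in> {X. X \<subseteq> V \<and> u \<in> X \<and> v \<in> X \<and> induced_P4 E X}"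
      using cross_path[OF u v] induced_P4_cross_path[OF u v] by simp
  qed
  moreover have "inj_on ?P (?A \<times> ?B)"
  proof (rule inj_onI)
    fix p q assume p: "p \<in> ?A \<times> ?B" and q: "q \<in> ?A \<times> ?B" and eq: "?P p = ?P q"
    obtain x y x' y' where pq: "p = (x, y)" "q = (x', y')" by fastforce
    have "distinct [u, x, y, v]" "distinct [u, x', y', v]"
      and "x \<notin> ?N v" "y' \<in> ?N v" "x' \<notin> ?N v" "y \<in> ?N v"
      using cross_path[OF u v] p q pq by blast+
    then show "p = q" using eq pq by auto
  qed
  ultimately show ?thesis
    unfolding sigma_def using finite_nbhd by (simp add: card_image card_cartesian_product)
qed

lemma unit_diff_family_nbhd:
  assumes "factor_simple V E I" and "factor_complete V E I"
  shows "unit_diff_family I (nbhd V E)"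
proof
  show "finite (nbhd V E i)" for i by (rule finite_nbhd)
  fix u v assume uv: "u \<in> I" "v \<in> I" "u \<noteq> v"
  then have "sigma V E u v = 1"
    using assms unfolding factor_simple_def factor_complete_def by (simp add: le_antisym)
  then show "card (nbhd V E u - nbhd V E v) = 1" using sigma_eq_card_nbhd_Diff[OF uv] by simp
qed

lemma finite_universal: "finite {x. universal V E x}"
  by (rule finite_subset[OF _ finite_V]) (auto simp: universal_def)

lemma universal_eq_Inter_nbhd:
  assumes two: "2 \<le> card I"
  shows "{x. universal V E x} = \<Inter>(nbhd V E ` I)"
proof (intro equalityI subsetI)
  fix x
  assume "x \<in> {x. universal V E x}"
  then have x: "x \<in> V" "\<And>y. y \<in> V \<Longrightarrow> y \<noteq> x \<Longrightarrow> E x y"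
    unfolding universal_def by blast+
  obtain y where "y \<in> I" "y \<noteq> x" using obtain_other_element[OF two] by metis
  then have "x \<notin> I" using x V_eq indep_nonadj by blast
  then show "x \<in> \<Inter>(nbhd V E ` I)"
    using x V_eq adj_sym unfolding nbhd_def by blast
next
  fix x
  assume x: "x \<in> \<Inter>(nbhd V E ` I)"
  obtain i where "i \<in> I" using obtain_other_element[OF two] by metis
  then have "x \<in> K" using x nbhd_subset_K by blast
  then show "x \<in> {x. universal V E x}"
    using x V_eq adj_sym clique_adj unfolding universal_def nbhd_def by blast
qed

lemma active_graph_iff_no_universal:
  assumes cover: "K = (\<Union>v\<in>I. nbhd V E v)" and two: "2 \<le> card I"
    and nbhd_Diff: "\<And>u v. u \<in> I \<Longrightarrow> v \<in> I \<Longrightarrow> u \<noteq> v \<Longrightarrow> nbhd V E u - nbhd V E v \<noteq> {}"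
  shows "active_graph V E \<longleftrightarrow> {x. universal V E x} = {}"
proof
  assume "active_graph V E"
  then show "{x. universal V E x} = {}"
    using not_active_vertex_if_universal[OF is_simple_graph]
    unfolding active_graph_def universal_def by blast
next
  assume none: "{x. universal V E x} = {}"
  show "active_graph V E" unfolding active_graph_def
  proof
    fix x assume "x \<in> V"
    then consider "x \<in> I" | "x \<in> K" using V_eq by blast
    then show "active_vertex V E x"
    proof cases
      case 1
      obtain v where v: "v \<in> I" "x \<noteq> v" using obtain_other_element[OF two] by metis
      obtain x' y where "x' \<in> nbhd V E x - nbhd V E v" "y \<in> nbhd V E v - nbhd V E x"
        using nbhd_Diff[OF 1 v] nbhd_Diff[OF v(1) 1] v(2) by blast
      then have "two_switch V E x x' y v" using two_switch_cross_path[OF 1 v(1)] by blast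
      then show ?thesis unfolding active_vertex_def by blast
    next
      case 2
      then obtain u where u: "u \<in> I" "x \<in> nbhd V E u" using cover by blast
      have "x \<notin> \<Inter>(nbhd V E ` I)" using none universal_eq_Inter_nbhd[OF two] by blast
      then obtain v where v: "v \<in> I" "x \<notin> nbhd V E v" by blast
      then obtain y where "y \<in> nbhd V E v - nbhd V E u" using nbhd_Diff[OF v(1) u(1)] u by blast
      then have "two_switch V E u x y v" using two_switch_cross_path[OF u(1) v(1)] u v by blast
      then show ?thesis unfolding active_vertex_def by blast
    qed
  qed
qed

lemma card_clique_le:
  assumes A: "is_clique V E A" and no_swing_I: "\<And>i. i \<in> I \<Longrightarrow> nbhd V E i \<noteq> K"
  shows "card A \<le> card K"
proof (cases "A \<subseteq> K")
  case True
  then show ?thesis using finite_K by (rule card_mono[rotated])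
next
  case False
  moreover have "A \<subseteq> K \<union> I" using A V_eq unfolding is_clique_def by simp
  ultimately obtain i where i: "i \<in> A" "i \<in> I" by blast
  have "A \<subseteq> insert i (nbhd V E i)"
  proof
    fix y assume "y \<in> A"
    then show "y \<in> insert i (nbhd V E i)" using A i unfolding is_clique_def nbhd_def by auto
  qed
  then have "card A \<le> Suc (card (nbhd V E i))"
    using card_mono[of "insert i (nbhd V E i)" A] finite_nbhd
    by (simp add: card_insert_if split: if_splits)
  moreover have "card (nbhd V E i) < card K"
    using nbhd_subset_K[OF i(2)] no_swing_I[OF i(2)] finite_K by (simp add: psubset_card_mono)
  ultimately show ?thesis by simp
qed

lemma card_indep_le:
  assumes A: "is_indep V E A" and no_swing_K: "\<And>k. k \<in> K \<Longrightarrow> \<exists>u\<in>I. E u k"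
  shows "card A \<le> card I"
proof (cases "A \<subseteq> I")
  case True
  then show ?thesis using finite_I by (rule card_mono[rotated])
next
  case False
  moreover have A_sub: "A \<subseteq> K \<union> I" using A V_eq unfolding is_indep_def by simp
  ultimately obtain k where k: "k \<in> A" "k \<in> K" by blast
  then obtain u where u: "u \<in> I" "E u k" using no_swing_K by blast
  have "A \<subseteq> insert k (I - {u})"
  proof
    fix y assume y: "y \<in> A"
    show "y \<in> insert k (I - {u})"
    proof (cases "y = k")
      case False
      then have "y \<notin> K" using A k y clique_adj unfolding is_indep_def by blast
      moreover have "y \<noteq> u" using A k y u unfolding is_indep_def by blast
      ultimately show ?thesis using y A_sub by blast
    qed simp
  qed
  then have "card A \<le> Suc (card (I - {u}))"
    using finite_I card_mono[of "insert k (I - {u})" A] by (simp add: card_insert_if split: if_splits)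
  also have "\<dots> = card I"
    using card_Diff_singleton[OF u(1)] card_gt_0_iff[of I] u(1) finite_I by fastforce
  finally show ?thesis .
qed

lemma balanced_if_no_swing:
  assumes no_swing_I: "\<And>i. i \<in> I \<Longrightarrow> nbhd V E i \<noteq> K"
    and no_swing_K: "\<And>k. k \<in> K \<Longrightarrow> \<exists>u\<in>I. E u k"
  shows "balanced V E K I"
  unfolding balanced_def
proof
  have "clique_number V E = card K"
    unfolding clique_number_def
  proof (rule Max_card_eqI[OF finite_V])
    show "is_clique V E K" using split unfolding split_graph_def by blast
    show "A \<subseteq> V" if "is_clique V E A" for A using that unfolding is_clique_def by blast
    fix A assume "is_clique V E A"
    then show "card A \<le> card K" using no_swing_I by (rule card_clique_le)
  qed
  then show "card K = clique_number V E" ..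
  have "indep_number V E = card I"
    unfolding indep_number_def
  proof (rule Max_card_eqI[OF finite_V])
    show "is_indep V E I" using split unfolding split_graph_def by blast
    show "A \<subseteq> V" if "is_indep V E A" for A using that unfolding is_indep_def by blast
    fix A assume "is_indep V E A"
    then show "card A \<le> card I" using no_swing_K by (rule card_indep_le)
  qed
  then show "card I = indep_number V E" ..
qed

lemma homogeneous_if_unit_diff_family:
  assumes cover: "K = (\<Union>v\<in>I. nbhd V E v)" and two: "2 \<le> card I"
    and "unit_diff_family I (nbhd V E)"
  shows "homogeneous V E K I"
proof -
  interpret unit_diff_family I "nbhd V E" by fact
  have "balanced V E K I"
  proof (rule balanced_if_no_swing)
    fix i assume i: "i \<in> I"
    obtain v where "v \<in> I" "v \<noteq> i" using obtain_other_element[OF two] by metis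
    then show "nbhd V E i \<noteq> K" using Diff_N_nonempty[of v i] nbhd_subset_K i by blast
  next
    fix k assume "k \<in> K"
    then show "\<exists>u\<in>I. E u k" using cover unfolding nbhd_def by blast
  qed
  then show ?thesis unfolding homogeneous_def degree_def using card_N_eq by blast
qed

end

theorem theorem4p3:
  fixes V :: "'a set" and E :: "'a \<Rightarrow> 'a \<Rightarrow> bool" and K I :: "'a set"
  assumes split: "split_graph V E K I"
    and simple: "factor_simple V E I"
    and complete: "factor_complete V E I"
    and cover: "K = (\<Union>v\<in>I. nbhd V E v)"
    and alpha2: "card I \<ge> 2"
  shows "homogeneous V E K I
    \<and> (\<forall>d. (\<forall>v\<in>I. degree V E v = d) \<longrightarrow>
        (let \<omega> = int (card K); \<alpha> = int (card I);
             u = int (card {x. universal V E x})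
         in 1 \<le> int d \<and> int d \<le> \<omega> - 1
          \<and> u \<in> {int d - 1, int d + 1 - \<alpha>}
          \<and> (u = int d - 1 \<longleftrightarrow> \<omega> = \<alpha> + int d - 1)
          \<and> (u = int d + 1 - \<alpha> \<longleftrightarrow> \<omega> = int d + 1)
          \<and> \<omega> = \<alpha> + u
          \<and> (active_graph V E \<longleftrightarrow> {x. universal V E x} = {})
          \<and> (active_graph V E \<longrightarrow> \<omega> = \<alpha> \<and> int d \<in> {1, \<omega> - 1})
          \<and> (\<omega> = \<alpha> \<or> d = 1 \<longrightarrow> active_graph V E)))"
proof -
  interpret split_bipartition V E K I using split by unfold_locales
  interpret unit_diff_family I "nbhd V E" using unit_diff_family_nbhd[OF simple complete] .
  let ?U = "{x. universal V E x}"
  have homogeneous: "homogeneous V E K I"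
    using homogeneous_if_unit_diff_family[OF cover alpha2] unit_diff_family_axioms .
  have active_iff: "active_graph V E \<longleftrightarrow> ?U = {}"
    using active_graph_iff_no_universal[OF cover alpha2 Diff_N_nonempty] .
  have card_U_0: "card ?U = 0 \<longleftrightarrow> ?U = {}" using finite_universal by simp
  obtain i where i: "i \<in> I" using obtain_other_element[OF alpha2] by metis
  have "card K = card I + card ?U"
    and "card ?U + 1 = card (nbhd V E i) \<or> card ?U + card I = card (nbhd V E i) + 1"
    using card_Union_Inter[OF finite_I alpha2 i] unfolding cover universal_eq_Inter_nbhd[OF alpha2]
    by simp_all
  then show ?thesis
  proof (intro conjI allI impI homogeneous, goal_cases)
    case (1 d)
    then have "card (nbhd V E i) = d" using i unfolding degree_def by blast
    with 1 show ?case using alpha2 unfolding Let_def active_iff card_U_0[symmetric] by auto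
  qed
qed

end
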